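(* Fix $\delta>0$ and an integer $d\ge0$. Let $K(s)$, $s\in B^d(1)$, be a continuous family of links transverse to $\xi_0$ in $\mathbb{R}^3$ such that $K(s)\subset B(\delta)$ for all $s\in\partial B^d(1)$. Then there is a homotopy $K(s,t)$, $0\le t\le1$, through transverse links, with $K(s,t)=K(s)$ for $s\in\partial B^d(1)$, $K(s,0)=K(s)$ and $K(s,1)\subset B(\delta)$ for every $s\in B^d(1)$. In particular, the space of transverse links in $\mathbb{R}^3$ is weakly homotopy equivalent to the space of transverse links contained in $B(\delta)$.
   Context: $\xi_0=\ker(dx_3-x_2\,dx_1+x_1\,dx_2)$ on $\mathbb{R}^3$; a link is transverse if it is everywhere transverse to $\xi_0$. $B^d(r)$ denotes the closed $d$-dimensional ball of radius $r$ about the origin and $B(r)=B^3(r)\subset\mathbb{R}^3$. *)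

theory Defs
  imports "HOL-Analysis.Analysis"
begin

text \<open>Parameter disc B^d(1) and its boundary sphere, for arbitrary d \<ge> 0,
  realised inside nat \<Rightarrow> real (functions vanishing from index d on);
  the product topology restricted to these sets is the Euclidean one.\<close>

definition pdisc :: "nat \<Rightarrow> (nat \<Rightarrow> real) set" where
  "pdisc d = {s. (\<forall>i\<ge>d. s i = 0) \<and> (\<Sum>i<d. (s i)\<^sup>2) \<le> 1}"

definition psphere :: "nat \<Rightarrow> (nat \<Rightarrow> real) set" where
  "psphere d = {s. (\<forall>i\<ge>d. s i = 0) \<and> (\<Sum>i<d. (s i)\<^sup>2) = 1}"

definition vd :: "(real \<Rightarrow> real^3) \<Rightarrow> real \<Rightarrow> real^3" where
  "vd g = (\<lambda>t. vector_derivative g (at t))"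

text \<open>The standard contact form alpha = dx3 - x2 dx1 + x1 dx2 evaluated at x on v.\<close>

definition alpha0 :: "real^3 \<Rightarrow> real^3 \<Rightarrow> real" where
  "alpha0 x v = v$3 - x$2 * v$1 + x$1 * v$2"

definition is_link :: "nat \<Rightarrow> (nat \<Rightarrow> real \<Rightarrow> real^3) \<Rightarrow> bool" where
  "is_link m K \<longleftrightarrow>
     (\<forall>i<m. \<forall>t. K i (t + 1) = K i t) \<and>
     (\<forall>i<m. \<forall>k t. ((vd ^^ k) (K i) has_vector_derivative (vd ^^ Suc k) (K i) t) (at t)) \<and>
     (\<forall>i<m. \<forall>t. vd (K i) t \<noteq> 0) \<and>
     inj_on (\<lambda>(i, t). K i t) ({..<m} \<times> {0..<1})"

definition transverse_link :: "nat \<Rightarrow> (nat \<Rightarrow> real \<Rightarrow> real^3) \<Rightarrow> bool" where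
  "transverse_link m K \<longleftrightarrow> is_link m K \<and> (\<forall>i<m. \<forall>t. alpha0 (K i t) (vd (K i) t) \<noteq> 0)"

definition link_in_ball :: "nat \<Rightarrow> real \<Rightarrow> (nat \<Rightarrow> real \<Rightarrow> real^3) \<Rightarrow> bool" where
  "link_in_ball m r K \<longleftrightarrow> (\<forall>i<m. \<forall>t. K i t \<in> cball 0 r)"

text \<open>Continuity of a family of links over a parameter set P in the C^\<infinity> topology:
  every t-derivative of every component is jointly continuous in (parameter, t).\<close>

definition cont_family :: "'p::topological_space set \<Rightarrow> nat \<Rightarrow> ('p \<Rightarrow> nat \<Rightarrow> real \<Rightarrow> real^3) \<Rightarrow> bool" where
  "cont_family P m K \<longleftrightarrow>
     (\<forall>i<m. \<forall>k. continuous_on (P \<times> UNIV) (\<lambda>(p, t). (vd ^^ k) (K p i) t))"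

end

theory Submission
  imports Defs "HOL-Library.Periodic_Fun"
begin

text \<open>The contact dilation \<open>(x\<^sub>1, x\<^sub>2, x\<^sub>3) \<mapsto> (\<lambda>x\<^sub>1, \<lambda>x\<^sub>2, \<lambda>\<^sup>2x\<^sub>3)\<close> pulls the contact form
  back to \<open>\<lambda>\<^sup>2\<alpha>\<close>, so for \<open>\<lambda> \<noteq> 0\<close> it maps transverse links to transverse links, and for
  \<open>0 \<le> \<lambda> \<le> 1\<close> it does not increase norms. By compactness all links of the family lie in
  some ball \<open>B(M)\<close>, so a small dilation moves them into \<open>B(\<delta>)\<close>. This cannot be done near the
  boundary sphere, where the family must stay fixed; there we instead reparametrize the
  disc radially, so that at time 1 every parameter with \<open>|s| \<ge> 1/2\<close> is pushed onto the
  sphere, where the links already lie in \<open>B(\<delta>)\<close>. The dilation factor is interpolated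
  between \<open>1\<close> on the sphere and its small value for \<open>|s| \<le> 1/2\<close>.\<close>

definition contact_dilation :: "real \<Rightarrow> real^3 \<Rightarrow> real^3" where
  "contact_dilation l x = (\<chi> j. (if j = 3 then l\<^sup>2 else l) * x$j)"

definition smooth_curve :: "(real \<Rightarrow> real^3) \<Rightarrow> bool" where
  "smooth_curve g \<longleftrightarrow> (\<forall>k t. ((vd ^^ k) g has_vector_derivative (vd ^^ Suc k) g t) (at t))"

lemma is_link_smooth_curve: "is_link m K \<Longrightarrow> i < m \<Longrightarrow> smooth_curve (K i)"
  by (simp add: is_link_def smooth_curve_def)

lemma contact_dilation_nth:
  "contact_dilation l x $ 1 = l * x$1" "contact_dilation l x $ 2 = l * x$2"
  "contact_dilation l x $ 3 = l\<^sup>2 * x$3"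
  by (simp_all add: contact_dilation_def)

lemma contact_dilation_1 [simp]: "contact_dilation 1 x = x"
  by (simp add: contact_dilation_def vec_eq_iff)

lemma bounded_linear_contact_dilation: "bounded_linear (contact_dilation l)"
proof -
  have "linear (contact_dilation l)"
    by (rule linearI) (simp_all add: contact_dilation_def vec_eq_iff algebra_simps)
  then show ?thesis by (simp add: linear_conv_bounded_linear)
qed

lemma alpha0_contact_dilation:
  "alpha0 (contact_dilation l x) (contact_dilation l v) = l\<^sup>2 * alpha0 x v"
  by (simp add: alpha0_def contact_dilation_nth algebra_simps power2_eq_square)

lemma contact_dilation_eq_iff:
  "l \<noteq> 0 \<Longrightarrow> contact_dilation l x = contact_dilation l y \<longleftrightarrow> x = y"
  by (auto simp: contact_dilation_def vec_eq_iff split: if_splits)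

lemma contact_dilation_eq_0_iff: "l \<noteq> 0 \<Longrightarrow> contact_dilation l x = 0 \<longleftrightarrow> x = 0"
  using contact_dilation_eq_iff[of l x 0] by (simp add: contact_dilation_def vec_eq_iff)

lemma norm_contact_dilation_le:
  assumes "0 \<le> l" "l \<le> 1"
  shows "norm (contact_dilation l x) \<le> l * norm x"
proof -
  have "l\<^sup>2 \<le> l" using assms by (simp add: power2_eq_square mult_left_le)
  then have "norm (contact_dilation l x) \<le> norm (l *\<^sub>R x)"
    using assms by (intro norm_le_componentwise_cart)
      (auto simp: contact_dilation_def abs_mult intro: mult_right_mono)
  then show ?thesis using assms by simp
qed

lemma continuous_on_contact_dilation [continuous_intros]:
  "continuous_on S f \<Longrightarrow> continuous_on S g \<Longrightarrow>
    continuous_on S (\<lambda>x. contact_dilation (f x) (g x))"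
  unfolding contact_dilation_def
proof (intro continuous_on_vec_lambda continuous_on_mult)
  fix j :: 3
  show "continuous_on S f \<Longrightarrow> continuous_on S (\<lambda>x. if j = 3 then (f x)\<^sup>2 else f x)"
    by (cases "j = 3") (auto intro!: continuous_intros)
qed (auto intro!: continuous_intros)

lemma vd_iter_contact_dilation:
  assumes "smooth_curve g"
  shows "(vd ^^ k) (\<lambda>\<tau>. contact_dilation l (g \<tau>)) = (\<lambda>\<tau>. contact_dilation l ((vd ^^ k) g \<tau>))"
proof (induction k)
  case (Suc k)
  have "((\<lambda>\<tau>. contact_dilation l ((vd ^^ k) g \<tau>)) has_vector_derivative
          contact_dilation l ((vd ^^ Suc k) g t)) (at t)" for t
    using assms bounded_linear.has_vector_derivative[OF bounded_linear_contact_dilation]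
    by (simp add: smooth_curve_def)
  then have "vd (\<lambda>\<tau>. contact_dilation l ((vd ^^ k) g \<tau>)) =
      (\<lambda>\<tau>. contact_dilation l ((vd ^^ Suc k) g \<tau>))"
    by (simp add: vd_def[of "\<lambda>\<tau>. contact_dilation l ((vd ^^ k) g \<tau>)"]
        vector_derivative_at fun_eq_iff)
  then show ?case using Suc.IH by simp
qed simp

lemma smooth_curve_contact_dilation:
  "smooth_curve g \<Longrightarrow> smooth_curve (\<lambda>\<tau>. contact_dilation l (g \<tau>))"
  unfolding smooth_curve_def[of "\<lambda>\<tau>. contact_dilation l (g \<tau>)"] vd_iter_contact_dilation
  by (intro allI bounded_linear.has_vector_derivative[OF bounded_linear_contact_dilation])
    (simp add: smooth_curve_def)

lemma transverse_link_contact_dilation: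
  assumes L: "transverse_link m L" and l: "l \<noteq> 0"
  shows "transverse_link m (\<lambda>i \<tau>. contact_dilation l (L i \<tau>))"
  unfolding transverse_link_def is_link_def
proof (intro conjI allI impI)
  fix i t assume i: "i < m"
  have smooth: "smooth_curve (L i)"
    using L i by (auto simp: transverse_link_def intro: is_link_smooth_curve)
  then have vd_dil: "vd (\<lambda>\<tau>. contact_dilation l (L i \<tau>)) t = contact_dilation l (vd (L i) t)"
    using vd_iter_contact_dilation[of "L i" 1 l] by simp
  show "contact_dilation l (L i (t + 1)) = contact_dilation l (L i t)"
    using L i by (simp add: transverse_link_def is_link_def)
  show "vd (\<lambda>\<tau>. contact_dilation l (L i \<tau>)) t \<noteq> 0"
  proof -
    have "vd (L i) t \<noteq> 0" using L i by (simp add: transverse_link_def is_link_def)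
    then show ?thesis using l by (simp add: vd_dil contact_dilation_eq_0_iff)
  qed
  show "alpha0 (contact_dilation l (L i t)) (vd (\<lambda>\<tau>. contact_dilation l (L i \<tau>)) t) \<noteq> 0"
    using L i l by (simp add: vd_dil alpha0_contact_dilation transverse_link_def)
  show "((vd ^^ k) (\<lambda>\<tau>. contact_dilation l (L i \<tau>)) has_vector_derivative
      (vd ^^ Suc k) (\<lambda>\<tau>. contact_dilation l (L i \<tau>)) t) (at t)" for k
    using smooth_curve_contact_dilation[OF smooth, of l] by (simp add: smooth_curve_def)
next
  have "inj (contact_dilation l)"
    using contact_dilation_eq_iff[OF l] by (intro injI) simp
  moreover have "inj_on (\<lambda>(i, t). L i t) ({..<m} \<times> {0..<1})"
    using L by (simp add: transverse_link_def is_link_def)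
  ultimately have "inj_on (contact_dilation l \<circ> (\<lambda>(i, t). L i t)) ({..<m} \<times> {0..<1})"
    by (simp add: comp_inj_on inj_on_subset)
  then show "inj_on (\<lambda>(i, t). contact_dilation l (L i t)) ({..<m} \<times> {0..<1})"
    by (simp add: comp_def case_prod_beta')
qed

lemma link_in_ball_contact_dilation:
  assumes "link_in_ball m r L" "0 \<le> l" "l \<le> 1" "l * r \<le> r'"
  shows "link_in_ball m r' (\<lambda>i \<tau>. contact_dilation l (L i \<tau>))"
  unfolding link_in_ball_def
proof (intro allI impI)
  fix i \<tau> assume "i < m"
  then have "norm (L i \<tau>) \<le> r" using assms(1) by (simp add: link_in_ball_def)
  then have "l * norm (L i \<tau>) \<le> r'" using assms(2,4) by (meson mult_left_mono order.trans)
  then show "contact_dilation l (L i \<tau>) \<in> cball 0 r'"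
    using norm_contact_dilation_le[OF assms(2,3), of "L i \<tau>"] by simp
qed

lemma cont_family_contact_dilation_reparam:
  fixes P :: "'a::topological_space set" and Q :: "'b::topological_space set"
  assumes K: "cont_family Q m K" "\<forall>q\<in>Q. is_link m (K q)"
    and \<rho>: "continuous_on P \<rho>" "\<rho> ` P \<subseteq> Q" and l: "continuous_on P l"
  shows "cont_family P m (\<lambda>p i \<tau>. contact_dilation (l p) (K (\<rho> p) i \<tau>))"
  unfolding cont_family_def
proof (intro allI impI)
  fix i k assume i: "i < m"
  have "continuous_on (Q \<times> UNIV) (\<lambda>(q, \<tau>). (vd ^^ k) (K q i) \<tau>)"
    using K(1) i by (simp add: cont_family_def)
  moreover have "continuous_on (P \<times> UNIV) (\<lambda>x. (\<rho> (fst x), snd x))"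
    by (intro continuous_on_Pair continuous_on_snd continuous_on_compose2[OF \<rho>(1) continuous_on_fst])
      auto
  moreover have "(\<lambda>x. (\<rho> (fst x), snd x)) ` (P \<times> UNIV) \<subseteq> Q \<times> UNIV"
    using \<rho>(2) by auto
  ultimately have "continuous_on (P \<times> UNIV)
      (\<lambda>x. (\<lambda>(q, \<tau>). (vd ^^ k) (K q i) \<tau>) (\<rho> (fst x), snd x))"
    by (rule continuous_on_compose2)
  then have "continuous_on (P \<times> UNIV) (\<lambda>x. (vd ^^ k) (K (\<rho> (fst x)) i) (snd x))"
    by simp
  moreover have "continuous_on (P \<times> UNIV) (\<lambda>x. l (fst x))"
    by (rule continuous_on_compose2[OF l continuous_on_fst]) auto
  ultimately have "continuous_on (P \<times> UNIV)
      (\<lambda>x. contact_dilation (l (fst x)) ((vd ^^ k) (K (\<rho> (fst x)) i) (snd x)))"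
    by (rule continuous_on_contact_dilation[rotated])
  then show "continuous_on (P \<times> UNIV)
      (\<lambda>(p, \<tau>). (vd ^^ k) (\<lambda>\<tau>. contact_dilation (l p) (K (\<rho> p) i \<tau>)) \<tau>)"
  proof (rule continuous_on_eq)
    fix x :: "'a \<times> real" assume "x \<in> P \<times> UNIV"
    then have "smooth_curve (K (\<rho> (fst x)) i)"
      using K(2) \<rho>(2) i by (auto intro!: is_link_smooth_curve)
    then show "contact_dilation (l (fst x)) ((vd ^^ k) (K (\<rho> (fst x)) i) (snd x)) =
        (case x of (p, \<tau>) \<Rightarrow> (vd ^^ k) (\<lambda>\<tau>. contact_dilation (l p) (K (\<rho> p) i \<tau>)) \<tau>)"
      by (simp add: vd_iter_contact_dilation case_prod_beta')
  qed
qed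

text \<open>Periodicity reduces a bound over all times to the compact period \<open>[0, 1]\<close>.\<close>

lemma cont_family_links_bounded:
  assumes P: "compact P" and K: "cont_family P m K" "\<forall>p\<in>P. is_link m (K p)"
  obtains M where "0 \<le> M" "\<forall>p\<in>P. link_in_ball m M (K p)"
proof -
  have "compact ((\<lambda>(p, t). K p i t) ` (P \<times> {0..1}))" if "i < m" for i
  proof (rule compact_continuous_image)
    have "continuous_on (P \<times> UNIV) (\<lambda>(p, t). (vd ^^ 0) (K p i) t)"
      using K(1) \<open>i < m\<close> unfolding cont_family_def by blast
    then show "continuous_on (P \<times> {0..1}) (\<lambda>(p, t). K p i t)"
      by (auto elim: continuous_on_subset)
  qed (use P in \<open>simp add: compact_Times\<close>)
  then have "bounded (\<Union>i<m. (\<lambda>(p, t). K p i t) ` (P \<times> {0..1}))"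
    by (intro bounded_UN compact_imp_bounded) auto
  then obtain M where M: "0 \<le> M"
    "\<And>x. x \<in> (\<Union>i<m. (\<lambda>(p, t). K p i t) ` (P \<times> {0..1})) \<Longrightarrow> norm x \<le> M"
    by (meson bounded_pos less_imp_le)
  have "link_in_ball m M (K p)" if p: "p \<in> P" for p
    unfolding link_in_ball_def
  proof (intro allI impI)
    fix i \<tau> assume i: "i < m"
    interpret periodic_fun_simple' "K p i"
      using K(2) p i by unfold_locales (simp add: is_link_def)
    have "K p i \<tau> = K p i (frac \<tau>)"
      using plus_of_int[of "frac \<tau>" "\<lfloor>\<tau>\<rfloor>"] by (simp add: frac_def)
    moreover have "frac \<tau> \<in> {0..1}" using frac_lt_1[of \<tau>] by (simp add: frac_ge_0)
    ultimately show "K p i \<tau> \<in> cball 0 M"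
      using M(2)[of "K p i \<tau>"] p i by fastforce
  qed
  with M(1) show ?thesis using that by blast
qed

definition pnorm :: "nat \<Rightarrow> (nat \<Rightarrow> real) \<Rightarrow> real" where
  "pnorm d s = sqrt (\<Sum>i<d. (s i)\<^sup>2)"

lemma pnorm_nonneg: "0 \<le> pnorm d s"
  by (simp add: pnorm_def sum_nonneg)

lemma pnorm_scale: "pnorm d (\<lambda>i. c * s i) = \<bar>c\<bar> * pnorm d s"
  by (simp add: pnorm_def power_mult_distrib real_sqrt_mult flip: sum_distrib_left)

lemma pdisc_iff_pnorm: "s \<in> pdisc d \<longleftrightarrow> (\<forall>i\<ge>d. s i = 0) \<and> pnorm d s \<le> 1"
  by (simp add: pdisc_def pnorm_def)

lemma psphere_iff_pnorm: "s \<in> psphere d \<longleftrightarrow> (\<forall>i\<ge>d. s i = 0) \<and> pnorm d s = 1"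
  by (simp add: psphere_def pnorm_def)

lemma continuous_on_pnorm: "continuous_on A (pnorm d)"
proof (rule continuous_on_subset[OF _ subset_UNIV])
  show "continuous_on UNIV (pnorm d)"
    unfolding pnorm_def by (intro continuous_intros continuous_on_product_coordinates)
qed

lemma compact_pdisc: "compact (pdisc d)"
proof -
  define Q :: "(nat \<Rightarrow> real) set" where "Q = PiE UNIV (\<lambda>i. {-1..1})"
  have "compactin (product_topology (\<lambda>i. euclidean) UNIV) Q"
    unfolding Q_def by (subst compactin_PiE) auto
  then have "compact Q" by (simp add: euclidean_product_topology)
  moreover have "closed (pdisc d)"
  proof -
    have "pdisc d = (\<Inter>i\<in>{d..}. {s. s i = 0}) \<inter> {s. pnorm d s \<le> 1}"
      by (auto simp: pdisc_iff_pnorm)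
    moreover have "closed {s::nat \<Rightarrow> real. s i = 0}" for i
      by (rule closed_Collect_eq) simp_all
    ultimately show ?thesis
      by (auto intro!: closed_Int closed_INT closed_Collect_le continuous_on_pnorm)
  qed
  moreover have "pdisc d \<subseteq> Q"
  proof
    fix s assume s: "s \<in> pdisc d"
    have "\<bar>s i\<bar> \<le> 1" for i
    proof (cases "i < d")
      case True
      then have "(s i)\<^sup>2 \<le> (\<Sum>i<d. (s i)\<^sup>2)" by (intro member_le_sum) auto
      also have "\<dots> \<le> 1" using s by (simp add: pdisc_def)
      finally show ?thesis by (simp add: abs_square_le_1)
    qed (use s in \<open>simp add: pdisc_def\<close>)
    then show "s \<in> Q" by (auto simp: Q_def abs_le_iff)
  qed
  ultimately show ?thesis
    by (metis compact_Int_closed inf.absorb_iff2)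
qed

text \<open>The factor grows from \<open>1\<close> to \<open>2\<close> in time but is capped at \<open>1 / |s|\<close> for
  \<open>|s| \<ge> 1/2\<close>, so the pushed parameter stays in the disc and reaches the sphere at time 1.\<close>

definition push_factor :: "nat \<Rightarrow> (nat \<Rightarrow> real) \<Rightarrow> real \<Rightarrow> real" where
  "push_factor d s t = min (1 / (1 - t / 2)) (1 / max (pnorm d s) (1/2))"

definition radial_push :: "nat \<Rightarrow> (nat \<Rightarrow> real) \<Rightarrow> real \<Rightarrow> nat \<Rightarrow> real" where
  "radial_push d s t = (\<lambda>i. push_factor d s t * s i)"

lemma push_factor_nonneg: "t \<le> 1 \<Longrightarrow> 0 \<le> push_factor d s t"
  using pnorm_nonneg[of d s] by (simp add: push_factor_def)

lemma push_factor_pnorm_le_1: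
  assumes "0 \<le> t" "t \<le> 1"
  shows "push_factor d s t * pnorm d s \<le> 1"
proof (cases "1/2 \<le> pnorm d s")
  case True
  then have "push_factor d s t \<le> 1 / pnorm d s" by (simp add: push_factor_def)
  then show ?thesis
    using True by (simp add: field_simps)
next
  case False
  have "1 / (1 - t / 2) \<le> 2" using assms by (simp add: field_simps)
  then have "push_factor d s t \<le> 2" unfolding push_factor_def by (rule min.coboundedI1)
  then have "push_factor d s t * pnorm d s \<le> 2 * (1/2)"
    using False pnorm_nonneg[of d s] by (intro mult_mono) auto
  then show ?thesis by simp
qed

lemma radial_push_in_pdisc:
  "s \<in> pdisc d \<Longrightarrow> 0 \<le> t \<Longrightarrow> t \<le> 1 \<Longrightarrow> radial_push d s t \<in> pdisc d"
  using push_factor_pnorm_le_1[of t d s] push_factor_nonneg[of t d s]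
  by (simp add: pdisc_iff_pnorm radial_push_def pnorm_scale)

lemma radial_push_0: "s \<in> pdisc d \<Longrightarrow> radial_push d s 0 = s"
  by (simp add: pdisc_iff_pnorm radial_push_def push_factor_def)

lemma radial_push_psphere:
  assumes "s \<in> psphere d" "0 \<le> t" "t \<le> 1"
  shows "radial_push d s t = s"
proof -
  have "1 \<le> 1 / (1 - t / 2)" using assms(2,3) by (simp add: field_simps)
  then show ?thesis
    using assms(1) by (simp add: psphere_iff_pnorm radial_push_def push_factor_def)
qed

lemma radial_push_1_in_psphere:
  assumes "s \<in> pdisc d" "1/2 \<le> pnorm d s"
  shows "radial_push d s 1 \<in> psphere d"
proof -
  have "1 / pnorm d s \<le> 2" using assms(2) by (simp add: field_simps)
  then have "push_factor d s 1 = 1 / pnorm d s"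
    using assms(2) by (simp add: push_factor_def)
  moreover have "pnorm d (\<lambda>i. 1 / pnorm d s * s i) = 1"
    using assms(2) pnorm_scale[of d "1 / pnorm d s" s] by simp
  ultimately show ?thesis
    using assms(1) by (simp add: pdisc_iff_pnorm psphere_iff_pnorm radial_push_def)
qed

lemma continuous_on_radial_push:
  "continuous_on (A \<times> {0..1}) (\<lambda>p. radial_push d (fst p) (snd p))"
proof -
  have "continuous_on (A \<times> {0..1}) (\<lambda>p. pnorm d (fst p))"
    by (intro continuous_on_compose2[OF continuous_on_pnorm continuous_on_fst]) auto
  then have "continuous_on (A \<times> {0..1}) (\<lambda>p. 1 / max (pnorm d (fst p)) (1/2))"
    by (intro continuous_on_divide continuous_on_max continuous_on_const) auto
  moreover have "continuous_on (A \<times> {0..1}) (\<lambda>p::_ \<times> real. 1 / (1 - snd p / 2))"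
    by (intro continuous_on_divide continuous_on_diff continuous_on_snd continuous_on_const
        continuous_on_id) auto
  ultimately have push: "continuous_on (A \<times> {0..1}) (\<lambda>p. push_factor d (fst p) (snd p))"
    unfolding push_factor_def by (intro continuous_on_min)
  show ?thesis
    unfolding radial_push_def
  proof (rule continuous_on_coordinatewise_then_product)
    fix i
    have "continuous_on (A \<times> {0..1}) (\<lambda>p. fst p i)"
      using continuous_on_product_then_coordinatewise[OF continuous_on_fst[OF continuous_on_id]] .
    then show "continuous_on (A \<times> {0..1}) (\<lambda>p. push_factor d (fst p) (snd p) * fst p i)"
      by (rule continuous_on_mult[OF push])
  qed
qed

definition dilation_factor :: "nat \<Rightarrow> real \<Rightarrow> (nat \<Rightarrow> real) \<Rightarrow> real \<Rightarrow> real" where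
  "dilation_factor d c s t = 1 - t * (1 - c) * min 1 (max 0 (2 - 2 * pnorm d s))"

lemma dilation_factor_bounds:
  assumes "0 \<le> t" "t \<le> 1" "c \<le> 1"
  shows "c \<le> dilation_factor d c s t" "dilation_factor d c s t \<le> 1"
proof -
  define h where "h = min 1 (max 0 (2 - 2 * pnorm d s))"
  have "0 \<le> t * h" "t * h \<le> 1" using assms by (auto simp: h_def intro: mult_le_one)
  then have "0 \<le> (1 - c) * (t * h)" "(1 - c) * (t * h) \<le> 1 - c"
    using assms(3) mult_left_le[of "t * h" "1 - c"] by auto
  then show "c \<le> dilation_factor d c s t" "dilation_factor d c s t \<le> 1"
    by (auto simp: dilation_factor_def h_def algebra_simps)
qed

lemma dilation_factor_0 [simp]: "dilation_factor d c s 0 = 1"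
  by (simp add: dilation_factor_def)

lemma dilation_factor_psphere: "s \<in> psphere d \<Longrightarrow> dilation_factor d c s t = 1"
  by (simp add: psphere_iff_pnorm dilation_factor_def)

lemma dilation_factor_1: "pnorm d s \<le> 1/2 \<Longrightarrow> dilation_factor d c s 1 = c"
  by (simp add: dilation_factor_def)

lemma continuous_on_dilation_factor:
  "continuous_on A (\<lambda>p. dilation_factor d c (fst p) (snd p))"
proof -
  have "continuous_on A (\<lambda>p. pnorm d (fst p))"
    by (intro continuous_on_compose2[OF continuous_on_pnorm continuous_on_fst]) auto
  then show ?thesis
    unfolding dilation_factor_def
    by (intro continuous_on_diff continuous_on_mult continuous_on_min continuous_on_max
        continuous_on_const continuous_on_snd continuous_on_id)
qed

definition shrink_homotopy ::
    "nat \<Rightarrow> real \<Rightarrow> ((nat \<Rightarrow> real) \<Rightarrow> nat \<Rightarrow> real \<Rightarrow> real^3) \<Rightarrow>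
      (nat \<Rightarrow> real) \<times> real \<Rightarrow> nat \<Rightarrow> real \<Rightarrow> real^3" where
  "shrink_homotopy d c K p i \<tau> =
     contact_dilation (dilation_factor d c (fst p) (snd p)) (K (radial_push d (fst p) (snd p)) i \<tau>)"

lemma cont_family_shrink_homotopy:
  assumes "cont_family (pdisc d) m K" "\<forall>s\<in>pdisc d. is_link m (K s)"
  shows "cont_family (pdisc d \<times> {0..1}) m (shrink_homotopy d c K)"
proof -
  have "(\<lambda>p. radial_push d (fst p) (snd p)) ` (pdisc d \<times> {0..1}) \<subseteq> pdisc d"
    by (auto simp: radial_push_in_pdisc)
  from cont_family_contact_dilation_reparam
      [OF assms continuous_on_radial_push this continuous_on_dilation_factor]
  show ?thesis
    unfolding shrink_homotopy_def[abs_def] .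
qed

lemma transverse_link_shrink_homotopy:
  assumes "\<forall>s\<in>pdisc d. transverse_link m (K s)" "0 < c" "c \<le> 1"
    and "s \<in> pdisc d" "t \<in> {0..1}"
  shows "transverse_link m (shrink_homotopy d c K (s, t))"
proof -
  have "dilation_factor d c s t \<noteq> 0"
    using dilation_factor_bounds(1)[of t c d s] assms(2,3,5) by auto
  then show ?thesis
    unfolding shrink_homotopy_def[abs_def] using assms(1,4,5)
    by (simp add: transverse_link_contact_dilation radial_push_in_pdisc)
qed

lemma shrink_homotopy_0: "s \<in> pdisc d \<Longrightarrow> shrink_homotopy d c K (s, 0) = K s"
  by (simp add: shrink_homotopy_def radial_push_0 fun_eq_iff)

lemma shrink_homotopy_psphere:
  "s \<in> psphere d \<Longrightarrow> t \<in> {0..1} \<Longrightarrow> shrink_homotopy d c K (s, t) = K s"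
  by (simp add: shrink_homotopy_def radial_push_psphere dilation_factor_psphere fun_eq_iff)

lemma shrink_homotopy_1_in_ball:
  assumes "\<forall>s\<in>psphere d. link_in_ball m \<delta> (K s)" "0 \<le> \<delta>"
    and "\<forall>s\<in>pdisc d. link_in_ball m M (K s)" "0 < c" "c \<le> 1" "c * M \<le> \<delta>"
    and s: "s \<in> pdisc d"
  shows "link_in_ball m \<delta> (shrink_homotopy d c K (s, 1))"
proof (cases "1/2 \<le> pnorm d s")
  case True
  then have "link_in_ball m \<delta> (K (radial_push d s 1))"
    using assms(1) s radial_push_1_in_psphere by blast
  then show ?thesis
    unfolding shrink_homotopy_def[abs_def] using dilation_factor_bounds[of 1 c d s] assms(2,4,5)
    by (intro link_in_ball_contact_dilation) (auto simp: mult_left_le_one_le)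
next
  case False
  then show ?thesis
    unfolding shrink_homotopy_def[abs_def] using assms(3-6) s
    by (intro link_in_ball_contact_dilation) (auto simp: dilation_factor_1 radial_push_in_pdisc)
qed

theorem lemma3p6:
  fixes \<delta> :: real and d m :: nat
    and K :: "(nat \<Rightarrow> real) \<Rightarrow> nat \<Rightarrow> real \<Rightarrow> real^3"
  assumes "\<delta> > 0"
    and "cont_family (pdisc d) m K"
    and "\<forall>s\<in>pdisc d. transverse_link m (K s)"
    and "\<forall>s\<in>psphere d. link_in_ball m \<delta> (K s)"
  shows "\<exists>H :: (nat \<Rightarrow> real) \<times> real \<Rightarrow> nat \<Rightarrow> real \<Rightarrow> real^3.
           cont_family (pdisc d \<times> {0..1}) m H \<and>
           (\<forall>s\<in>pdisc d. \<forall>t\<in>{0..1}. transverse_link m (H (s, t))) \<and>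
           (\<forall>s\<in>psphere d. \<forall>t\<in>{0..1}. \<forall>i<m. H (s, t) i = K s i) \<and>
           (\<forall>s\<in>pdisc d. \<forall>i<m. H (s, 0) i = K s i) \<and>
           (\<forall>s\<in>pdisc d. link_in_ball m \<delta> (H (s, 1)))"
proof -
  have links: "\<forall>s\<in>pdisc d. is_link m (K s)"
    using assms(3) by (simp add: transverse_link_def)
  obtain M where M: "0 \<le> M" "\<forall>s\<in>pdisc d. link_in_ball m M (K s)"
    using cont_family_links_bounded[OF compact_pdisc assms(2) links] by blast
  define c where "c = min 1 (\<delta> / (M + 1))"
  have c: "0 < c" "c \<le> 1" "c * M \<le> \<delta>"
    using assms(1) M(1) by (auto simp: c_def min_def field_simps intro: mult_left_le)
  show ?thesis
  proof (intro exI[of _ "shrink_homotopy d c K"] conjI ballI allI impI)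
    show "cont_family (pdisc d \<times> {0..1}) m (shrink_homotopy d c K)"
      using assms(2) links by (rule cont_family_shrink_homotopy)
    show "transverse_link m (shrink_homotopy d c K (s, t))" if "s \<in> pdisc d" "t \<in> {0..1}" for s t
      using assms(3) c(1,2) that by (rule transverse_link_shrink_homotopy)
    show "link_in_ball m \<delta> (shrink_homotopy d c K (s, 1))" if "s \<in> pdisc d" for s
      using assms(4,1) M(2) c that by (intro shrink_homotopy_1_in_ball) auto
  qed (simp_all add: shrink_homotopy_0 shrink_homotopy_psphere)
qed

end
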